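(* Let $m$ be a positive integer and $1<n\le m$. Let $K\in C^{[m]}(I^2)$ be independent of $\kappa$, and suppose that $K_{n-1,1},K_{n-1,2}$ are less oscillatory kernels of order $n-1$. Then $J_{n,1},J_{n,2}$ are less oscillatory kernels of order $n$.
   Context: $I=[-1,1]$; $\kappa\in(1,\infty)$; functions are complex-valued; a $\kappa$-parameterized function is a family indexed by $\kappa>1$; "independent of $\kappa$" means a fixed function. $C^{[m]}(I^2)$: functions with continuous $L^{(\alpha,\beta)}=\partial_s^\alpha\partial_t^\beta L$ for $\alpha,\beta\le m$; $C^{[m]}_{\kappa,0}(I^2)$: $\kappa$-parameterized $L\in C^{[m]}(I^2)$ with $\max_{\alpha,\beta\le m}\|L^{(\alpha,\beta)}\|_\infty\le c$ for all $\kappa\ge\kappa_0$, for some $c,\kappa_0>0$. A less oscillatory kernel of order $k$ is an $L\in C^{[m]}_{\kappa,0}(I^2)$ for which there is $c_0>0$ independent of $\kappa$ with $\max_{s\in I}|L^{(\alpha,\beta)}(s,s)|\le c_0\kappa^{-(k-\alpha-\beta-1)}$ whenever $0\le\alpha+\beta+1\le k$. Recursive kernels: $K_{1,1}=K_{1,2}=K$. For $n>1$ and $\epsilon\in\{1,2\}$: $L_{n-1,\epsilon}(s,t,x)=K(s,x)K_{n-1,\epsilon}(x,t)$; $J_{n,\epsilon}(s,t)=(-1)^{\epsilon-1}\int_t^sL_{n-1,\epsilon}(s,t,x)\,dx$. Let $\mathbb V=\{(1,-1,2,t),(2,-1,2,s),(3,1,1,s),(4,1,1,t)\}$; for $(j,\tilde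 j,\epsilon_j,z)\in\mathbb V$: $Q_{n,j}(s,t)=-\tilde j\int_{\tilde j}^zL_{n-1,\epsilon_j}(s,t,x)e^{2i\tilde j\kappa x}dx$, $R_{n,j}(s,t)=\tilde je^{2i\kappa}\tilde\sigma_m[L_{n-1,\epsilon_j}(s,t,\cdot)](\tilde j)$ with $\tilde\sigma_m[u](x)=\sum_{p=0}^{m-1}\frac{(-1)^p}{(2i\tilde j\kappa)^{p+1}}u^{(p)}(x)$, and $G_{n,j}(s,t)=(Q_{n,j}(s,t)-R_{n,j}(s,t))e^{-2i\tilde j\kappa z}$. Finally $K_{n,\epsilon}=G_{n,\epsilon}+J_{n,\epsilon}+G_{n,\epsilon+2}$. *)

theory Defs
  imports "HOL-Analysis.Analysis"
begin

type_synonym kern = "real \<Rightarrow> real \<Rightarrow> complex"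
  (* a kernel on I^2 = [-1,1]^2 *)
type_synonym pkern = "real \<Rightarrow> real \<Rightarrow> real \<Rightarrow> complex"
  (* a kappa-parameterized kernel: L kappa s t *)

abbreviation Ivl :: "real set" where "Ivl \<equiv> {-1..1}"

fun dI :: "nat \<Rightarrow> (real \<Rightarrow> complex) \<Rightarrow> real \<Rightarrow> complex" where
  "dI 0 u = u"
| "dI (Suc p) u = (\<lambda>x. vector_derivative (dI p u) (at x within Ivl))"

fun dt :: "nat \<Rightarrow> kern \<Rightarrow> kern" where
  "dt 0 L = L"
| "dt (Suc b) L = (\<lambda>s t. vector_derivative (\<lambda>t'. dt b L s t') (at t within Ivl))"

fun ds :: "nat \<Rightarrow> kern \<Rightarrow> kern" where
  "ds 0 L = L"
| "ds (Suc a) L = (\<lambda>s t. vector_derivative (\<lambda>s'. ds a L s' t) (at s within Ivl))"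

definition mixed :: "nat \<Rightarrow> nat \<Rightarrow> kern \<Rightarrow> kern" where
  "mixed a b L = ds a (dt b L)"

definition Cm :: "nat \<Rightarrow> kern \<Rightarrow> bool" where
  "Cm m L \<longleftrightarrow>
     (\<forall>b<m. \<forall>s\<in>Ivl. \<forall>t\<in>Ivl.
        ((\<lambda>t'. dt b L s t') has_vector_derivative dt (Suc b) L s t) (at t within Ivl)) \<and>
     (\<forall>a<m. \<forall>b\<le>m. \<forall>s\<in>Ivl. \<forall>t\<in>Ivl.
        ((\<lambda>s'. mixed a b L s' t) has_vector_derivative mixed (Suc a) b L s t) (at s within Ivl)) \<and>
     (\<forall>a\<le>m. \<forall>b\<le>m. continuous_on (Ivl \<times> Ivl) (\<lambda>p. mixed a b L (fst p) (snd p)))"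

definition Cmk0 :: "nat \<Rightarrow> pkern \<Rightarrow> bool" where
  "Cmk0 m L \<longleftrightarrow> (\<forall>\<kappa>>1. Cm m (L \<kappa>)) \<and>
     (\<exists>c \<kappa>0. c > 0 \<and> \<kappa>0 > 0 \<and>
        (\<forall>\<kappa>. \<kappa> > 1 \<and> \<kappa> \<ge> \<kappa>0 \<longrightarrow>
           (\<forall>a\<le>m. \<forall>b\<le>m. \<forall>s\<in>Ivl. \<forall>t\<in>Ivl. norm (mixed a b (L \<kappa>) s t) \<le> c)))"

definition less_osc :: "nat \<Rightarrow> nat \<Rightarrow> pkern \<Rightarrow> bool" where
  "less_osc m k L \<longleftrightarrow> Cmk0 m L \<and>
     (\<exists>c0>0. \<forall>\<kappa>>1. \<forall>a b. a + b + 1 \<le> k \<longrightarrow>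
        (\<forall>s\<in>Ivl. norm (mixed a b (L \<kappa>) s s)
                    \<le> c0 * \<kappa> powr (- (real k - real a - real b - 1))))"

definition oint :: "real \<Rightarrow> real \<Rightarrow> (real \<Rightarrow> complex) \<Rightarrow> complex" where
  "oint a b f = (if a \<le> b then integral {a..b} f else - integral {b..a} f)"

text \<open>L_{n-1,eps}(s,t,x) = K(s,x) K_{n-1,eps}(x,t), where Kp = K_{n-1,eps}\<close>
definition Lfun :: "kern \<Rightarrow> kern \<Rightarrow> real \<Rightarrow> real \<Rightarrow> real \<Rightarrow> complex" where
  "Lfun K Kp s t x = K s x * Kp x t"

definition Jfun :: "kern \<Rightarrow> kern \<Rightarrow> nat \<Rightarrow> kern" where
  "Jfun K Kp e s t = (-1) ^ (e - 1) * oint t s (Lfun K Kp s t)"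

text \<open>Q_{n,j}, with jt = tilde j and endpoint z\<close>
definition Qfun :: "kern \<Rightarrow> kern \<Rightarrow> real \<Rightarrow> real \<Rightarrow> real \<Rightarrow> real \<Rightarrow> real \<Rightarrow> complex" where
  "Qfun K Kp \<kappa> jt z s t =
     - of_real jt * oint jt z (\<lambda>x. Lfun K Kp s t x * exp (2 * \<i> * of_real jt * of_real \<kappa> * of_real x))"

definition sigma_t :: "nat \<Rightarrow> real \<Rightarrow> real \<Rightarrow> (real \<Rightarrow> complex) \<Rightarrow> real \<Rightarrow> complex" where
  "sigma_t m \<kappa> jt u x =
     (\<Sum>p<m. (-1) ^ p / (2 * \<i> * of_real jt * of_real \<kappa>) ^ (p + 1) * dI p u x)"

definition Rfun :: "nat \<Rightarrow> kern \<Rightarrow> kern \<Rightarrow> real \<Rightarrow> real \<Rightarrow> real \<Rightarrow> real \<Rightarrow> complex" where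
  "Rfun m K Kp \<kappa> jt s t =
     of_real jt * exp (2 * \<i> * of_real \<kappa>) * sigma_t m \<kappa> jt (Lfun K Kp s t) jt"

definition Gfun :: "nat \<Rightarrow> kern \<Rightarrow> kern \<Rightarrow> real \<Rightarrow> real \<Rightarrow> real \<Rightarrow> real \<Rightarrow> real \<Rightarrow> complex" where
  "Gfun m K Kp \<kappa> jt z s t =
     (Qfun K Kp \<kappa> jt z s t - Rfun m K Kp \<kappa> jt s t) * exp (- 2 * \<i> * of_real jt * of_real \<kappa> * of_real z)"

text \<open>G_{n,j} following the table V = {(1,-1,2,t),(2,-1,2,s),(3,1,1,s),(4,1,1,t)};
  P1 = K_{n-1,1}, P2 = K_{n-1,2}.\<close>
definition Gj :: "nat \<Rightarrow> kern \<Rightarrow> kern \<Rightarrow> kern \<Rightarrow> real \<Rightarrow> nat \<Rightarrow> kern" where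
  "Gj m K P1 P2 \<kappa> j s t =
     (if j = 1 then Gfun m K P2 \<kappa> (-1) t s t
      else if j = 2 then Gfun m K P2 \<kappa> (-1) s s t
      else if j = 3 then Gfun m K P1 \<kappa> 1 s s t
      else Gfun m K P1 \<kappa> 1 t s t)"

text \<open>Recursive kernels K_{n,eps} (for fixed kappa); meaningful for n >= 1, eps in {1,2}.\<close>
fun Kn :: "kern \<Rightarrow> nat \<Rightarrow> real \<Rightarrow> nat \<Rightarrow> nat \<Rightarrow> kern" where
  "Kn K m \<kappa> 0 e = K"
| "Kn K m \<kappa> (Suc 0) e = K"
| "Kn K m \<kappa> (Suc (Suc n)) e =
     (\<lambda>s t. Gj m K (Kn K m \<kappa> (Suc n) 1) (Kn K m \<kappa> (Suc n) 2) \<kappa> e s t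
          + Jfun K (Kn K m \<kappa> (Suc n) e) e s t
          + Gj m K (Kn K m \<kappa> (Suc n) 1) (Kn K m \<kappa> (Suc n) 2) \<kappa> (e + 2) s t)"

end

theory Submission
  imports Defs
begin

(*
  Every mixed derivative d_s^alpha d_t^beta of J(s,t) = +- int_t^s K(s,x) P(x,t) dx,
  P = K_{n-1,eps}, is a finite sum of the integral +- int_t^s K^(alpha,0)(s,x) P^(0,beta)(x,t) dx
  and of products K^(a1,b1) P^(a2,b2) evaluated at points with coordinates among s and t, which
  appear whenever a derivative hits an integration limit; each of them has a2 + b2 < alpha + beta.
  Differentiation maps such sums to such sums, so J is in C^[m] with bounds uniform in kappa.
  On the diagonal the integral vanishes, and each product is bounded by a derivative of P of
  order at most alpha + beta - 1 at a diagonal point, which is O(kappa^-(n-alpha-beta-1)) since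
  P is less oscillatory of order n - 1.
*)

section \<open>Differentiation on an interval\<close>

lemma norm_diff_le_of_vector_derivative_bound:
  fixes f :: "real \<Rightarrow> 'a::real_normed_vector"
  assumes "convex S" "\<And>x. x \<in> S \<Longrightarrow> (f has_vector_derivative f' x) (at x within S)"
    "\<And>x. x \<in> S \<Longrightarrow> norm (f' x) \<le> B" "x \<in> S" "y \<in> S"
  shows "norm (f x - f y) \<le> B * norm (x - y)"
proof (rule differentiable_bound[OF assms(1) _ _ assms(4,5)])
  fix x assume "x \<in> S"
  show "(f has_derivative (\<lambda>h. h *\<^sub>R f' x)) (at x within S)"
    using assms(2)[OF \<open>x \<in> S\<close>] by (simp add: has_vector_derivative_def)
  show "onorm (\<lambda>h. h *\<^sub>R f' x) \<le> B"
    using assms(3)[OF \<open>x \<in> S\<close>] by (simp add: onorm_scaleR_left onorm_id bounded_linear_ident)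
qed

lemma has_vector_derivative_diagonal:
  fixes f fs :: "real \<Rightarrow> real \<Rightarrow> 'a::real_normed_vector"
  assumes S: "convex S" and t: "t \<in> S"
    and fs: "\<And>x y. x \<in> S \<Longrightarrow> y \<in> S \<Longrightarrow> ((\<lambda>x'. f x' y) has_vector_derivative fs x y) (at x within S)"
    and fs_cont: "continuous_on (S \<times> S) (\<lambda>p. fs (fst p) (snd p))"
    and ft: "((\<lambda>y. f t y) has_vector_derivative ft) (at t within S)"
  shows "((\<lambda>x. f x x) has_vector_derivative fs t t + ft) (at t within S)"
  unfolding has_vector_derivative_def has_derivative_within_alt
proof (intro conjI allI impI)
  show "bounded_linear (\<lambda>h. h *\<^sub>R (fs t t + ft))" by (rule bounded_linear_scaleR_left)
  fix e :: real assume e: "e > 0"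
  from ft[unfolded has_vector_derivative_def has_derivative_within_alt] e
  obtain d1 where d1: "d1 > 0" and near_t: "\<And>y. y \<in> S \<Longrightarrow> norm (y - t) < d1 \<Longrightarrow>
      norm (f t y - f t t - (y - t) *\<^sub>R ft) \<le> e/2 * norm (y - t)"
    by (meson half_gt_zero)
  from fs_cont[unfolded continuous_on_iff, rule_format, of "(t, t)" "e/2"] e t
  obtain d2 where d2: "d2 > 0" and near_tt: "\<And>p. p \<in> S \<times> S \<Longrightarrow> dist p (t, t) < d2 \<Longrightarrow>
      dist (fs (fst p) (snd p)) (fs t t) < e/2" by auto
  show "\<exists>d>0. \<forall>y\<in>S. norm (y - t) < d \<longrightarrow>
      norm (f y y - f t t - (y - t) *\<^sub>R (fs t t + ft)) \<le> e * norm (y - t)"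
  proof (intro exI[of _ "min d1 (d2/2)"] conjI ballI impI)
    show "min d1 (d2/2) > 0" using d1 d2 by simp
    fix y assume y: "y \<in> S" and yd: "norm (y - t) < min d1 (d2/2)"
    define seg where "seg = closed_segment t y"
    have seg: "seg \<subseteq> S" unfolding seg_def by (rule closed_segment_subset[OF t y S])
    \<comment> \<open>mean value theorem for \<open>x \<mapsto> f x y\<close> with the linear part at the diagonal point removed\<close>
    define g where "g = (\<lambda>\<sigma>. f \<sigma> y - \<sigma> *\<^sub>R fs t t)"
    have g_deriv: "(g has_vector_derivative (fs \<sigma> y - fs t t)) (at \<sigma> within seg)" if "\<sigma> \<in> seg" for \<sigma>
      unfolding g_def
      by (rule has_vector_derivative_diff, rule has_vector_derivative_within_subset[OF fs])
         (use that seg y in \<open>auto intro!: derivative_eq_intros\<close>)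
    have g_deriv_small: "norm (fs \<sigma> y - fs t t) \<le> e/2" if "\<sigma> \<in> seg" for \<sigma>
    proof -
      have "\<bar>\<sigma> - t\<bar> \<le> \<bar>y - t\<bar>" using that unfolding seg_def
        by (auto simp: closed_segment_eq_real_ivl split: if_splits)
      hence "dist (\<sigma>, y) (t, t) < d2"
        using yd sqrt_sum_squares_le_sum_abs[of "\<sigma> - t" "y - t"]
        by (simp add: dist_Pair_Pair dist_real_def)
      thus ?thesis using near_tt[of "(\<sigma>, y)"] that seg y by (auto simp: dist_norm)
    qed
    have "norm (g y - g t) \<le> e/2 * norm (y - t)"
      by (rule norm_diff_le_of_vector_derivative_bound[OF _ g_deriv g_deriv_small])
         (auto simp: seg_def)
    hence A: "norm (f y y - f t y - (y - t) *\<^sub>R fs t t) \<le> e/2 * norm (y - t)"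
      by (simp add: g_def algebra_simps)
    have B: "norm (f t y - f t t - (y - t) *\<^sub>R ft) \<le> e/2 * norm (y - t)"
      using near_t y yd by auto
    have "f y y - f t t - (y - t) *\<^sub>R (fs t t + ft) =
       (f y y - f t y - (y - t) *\<^sub>R fs t t) + (f t y - f t t - (y - t) *\<^sub>R ft)"
      by (simp add: algebra_simps scaleR_add_right)
    also have "norm \<dots> \<le> e * norm (y - t)"
      using norm_triangle_le[OF add_mono[OF A B]] by simp
    finally show "norm (f y y - f t t - (y - t) *\<^sub>R (fs t t + ft)) \<le> e * norm (y - t)" .
  qed
qed

lemma leibniz_rule_vector_derivative_interval:
  fixes G Gd :: "real \<Rightarrow> real \<Rightarrow> 'a::banach"
  assumes "\<And>z x. z \<in> U \<Longrightarrow> x \<in> {a..b} \<Longrightarrow>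
      ((\<lambda>z'. G z' x) has_vector_derivative Gd z x) (at z within U)"
    and "\<And>z. z \<in> U \<Longrightarrow> G z integrable_on {a..b}"
    and "continuous_on (U \<times> {a..b}) (\<lambda>p. Gd (fst p) (snd p))"
    and "convex U" "z \<in> U"
  shows "((\<lambda>z'. integral {a..b} (G z')) has_vector_derivative integral {a..b} (Gd z)) (at z within U)"
  using leibniz_rule_vector_derivative[of U a b G Gd z] assms by (simp add: split_beta)

lemma mixed_partial_swap:
  fixes h hs ht g :: "real \<Rightarrow> real \<Rightarrow> 'a::banach"
  assumes ab: "a < b"
    and hs: "\<And>s t. s \<in> {a..b} \<Longrightarrow> t \<in> {a..b} \<Longrightarrow>
      ((\<lambda>s'. h s' t) has_vector_derivative hs s t) (at s within {a..b})"
    and ht: "\<And>s t. s \<in> {a..b} \<Longrightarrow> t \<in> {a..b} \<Longrightarrow>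
      ((\<lambda>t'. h s t') has_vector_derivative ht s t) (at t within {a..b})"
    and g: "\<And>s t. s \<in> {a..b} \<Longrightarrow> t \<in> {a..b} \<Longrightarrow>
      ((\<lambda>s'. ht s' t) has_vector_derivative g s t) (at s within {a..b})"
    and g_cont: "continuous_on ({a..b} \<times> {a..b}) (\<lambda>p. g (fst p) (snd p))"
    and s: "s \<in> {a..b}" and t: "t \<in> {a..b}"
  shows "((\<lambda>t'. hs s t') has_vector_derivative g s t) (at t within {a..b})"
proof -
  have hs_eq: "hs s \<tau> = hs s a + integral {a..\<tau>} (g s)" if \<tau>: "\<tau> \<in> {a..b}" for \<tau>
  proof -
    have sub: "{a..\<tau>} \<subseteq> {a..b}" using \<tau> by auto
    have ht_int: "(ht s' has_integral (h s' \<tau> - h s' a)) {a..\<tau>}" if "s' \<in> {a..b}" for s'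
      by (rule fundamental_theorem_of_calculus)
         (use \<tau> sub that in \<open>auto intro: has_vector_derivative_within_subset[OF ht]\<close>)
    have "((\<lambda>s'. integral {a..\<tau>} (ht s')) has_vector_derivative integral {a..\<tau>} (g s))
        (at s within {a..b})"
      by (rule leibniz_rule_vector_derivative_interval)
         (use s sub ht_int g in \<open>auto intro: continuous_on_subset[OF g_cont]\<close>)
    moreover have "((\<lambda>s'. integral {a..\<tau>} (ht s')) has_vector_derivative hs s \<tau> - hs s a)
        (at s within {a..b})"
      by (rule has_vector_derivative_transform[where f="\<lambda>s'. h s' \<tau> - h s' a"])
         (use s \<tau> ht_int ab in \<open>auto intro!: has_vector_derivative_diff hs simp: integral_unique\<close>)
    ultimately have "hs s \<tau> - hs s a = integral {a..\<tau>} (g s)"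
      using vector_derivative_unique_within_closed_interval[OF ab, of s] s by auto
    thus ?thesis by (simp add: algebra_simps)
  qed
  have "continuous_on {a..b} (g s)"
    by (rule continuous_on_compose2[OF g_cont, where f="\<lambda>y. (s, y)", simplified])
       (use s in \<open>auto intro!: continuous_intros\<close>)
  from integral_has_vector_derivative[OF this t]
  have "((\<lambda>t'. hs s a + integral {a..t'} (g s)) has_vector_derivative g s t) (at t within {a..b})"
    by (auto intro!: derivative_eq_intros)
  thus ?thesis by (rule has_vector_derivative_transform[OF t hs_eq, rotated])
qed

lemma mixed_0_left [simp]: "mixed 0 b L = dt b L"
  by (simp add: mixed_def)

lemma Cm_has_dt:
  "Cm m L \<Longrightarrow> b < m \<Longrightarrow> s \<in> Ivl \<Longrightarrow> t \<in> Ivl \<Longrightarrow>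
   ((\<lambda>t'. dt b L s t') has_vector_derivative dt (Suc b) L s t) (at t within Ivl)"
  unfolding Cm_def by blast

lemma Cm_has_ds_mixed:
  "Cm m L \<Longrightarrow> a < m \<Longrightarrow> b \<le> m \<Longrightarrow> s \<in> Ivl \<Longrightarrow> t \<in> Ivl \<Longrightarrow>
   ((\<lambda>s'. mixed a b L s' t) has_vector_derivative mixed (Suc a) b L s t) (at s within Ivl)"
  unfolding Cm_def by blast

lemma Cm_continuous_mixed:
  "Cm m L \<Longrightarrow> a \<le> m \<Longrightarrow> b \<le> m \<Longrightarrow>
   continuous_on (Ivl \<times> Ivl) (\<lambda>p. mixed a b L (fst p) (snd p))"
  unfolding Cm_def by blast

lemma Cm_has_dt_mixed:
  assumes L: "Cm m L"
  shows "a \<le> m \<Longrightarrow> b < m \<Longrightarrow> s \<in> Ivl \<Longrightarrow> t \<in> Ivl \<Longrightarrow>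
   ((\<lambda>t'. mixed a b L s t') has_vector_derivative mixed a (Suc b) L s t) (at t within Ivl)"
proof (induction a arbitrary: b s t)
  case 0
  then show ?case using Cm_has_dt[OF L] by simp
next
  case (Suc a)
  show ?case
    by (rule mixed_partial_swap[where h="mixed a b L" and ht="mixed a (Suc b) L"])
       (use Suc Cm_has_ds_mixed[OF L] Cm_continuous_mixed[OF L] in auto)
qed

lemma Cm_has_vector_derivative_mixed_along:
  assumes L: "Cm m L" and x: "x \<in> Ivl" and c1: "c1 \<in> Ivl" and c2: "c2 \<in> Ivl"
    and ab: "a \<le> m" "b \<le> m" "u \<longrightarrow> a < m" "v \<longrightarrow> b < m"
  shows "((\<lambda>x. mixed a b L (if u then x else c1) (if v then x else c2)) has_vector_derivative
      (if u then mixed (Suc a) b L (if u then x else c1) (if v then x else c2) else 0)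
    + (if v then mixed a (Suc b) L (if u then x else c1) (if v then x else c2) else 0))
     (at x within Ivl)"
proof (cases u; cases v)
  assume u v
  have "((\<lambda>x. mixed a b L x x) has_vector_derivative mixed (Suc a) b L x x + mixed a (Suc b) L x x)
      (at x within Ivl)"
    by (rule has_vector_derivative_diagonal)
       (use x ab \<open>u\<close> \<open>v\<close> Cm_has_ds_mixed[OF L] Cm_continuous_mixed[OF L] Cm_has_dt_mixed[OF L] in auto)
  thus ?thesis using \<open>u\<close> \<open>v\<close> by simp
qed (use Cm_has_ds_mixed[OF L, of a b x c2] Cm_has_dt_mixed[OF L, of a b c1 x] ab x c1 c2 in auto)

section \<open>Oriented integrals with variable limits\<close>

lemma continuous_on_kernel_compose:
  assumes F: "continuous_on (A \<times> B) (\<lambda>p. F (fst p) (snd p))"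
    and "continuous_on S g1" "continuous_on S g2" "g1 ` S \<subseteq> A" "g2 ` S \<subseteq> B"
  shows "continuous_on S (\<lambda>z. F (g1 z) (g2 z))"
  by (rule continuous_on_compose2[OF F, where f="\<lambda>z. (g1 z, g2 z)", simplified])
     (use assms in \<open>auto intro!: continuous_intros\<close>)

lemma continuous_on_kernel_slice:
  assumes "continuous_on (A \<times> B) (\<lambda>p. F (fst p) (snd p))" "z \<in> A"
  shows "continuous_on B (F z)"
  using continuous_on_kernel_compose[OF assms(1), of B "\<lambda>_. z" id] assms(2)
  by (simp add: continuous_on_id image_subset_iff)

lemma continuous_on_compact_bounded:
  fixes F :: "'a::topological_space \<Rightarrow> 'b::real_normed_vector"
  assumes "continuous_on S F" "compact S"
  shows "\<exists>M\<ge>0. \<forall>p\<in>S. norm (F p) \<le> M"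
proof -
  obtain M where "M > 0" "\<forall>y\<in>F ` S. norm y \<le> M"
    using compact_imp_bounded[OF compact_continuous_image[OF assms]] bounded_pos by blast
  thus ?thesis by (intro exI[of _ M]) auto
qed

lemma oint_reverse: "oint a b f = - oint b a f"
  by (auto simp: oint_def)

lemma oint_refl [simp]: "oint a a f = 0"
  by (simp add: oint_def)

lemma oint_eq_integral_diff:
  fixes f :: "real \<Rightarrow> complex"
  assumes "a \<in> {c..d}" "b \<in> {c..d}" "continuous_on {c..d} f"
  shows "oint a b f = integral {c..b} f - integral {c..a} f"
proof -
  have int: "f integrable_on {x..y}" if "x \<in> {c..d}" "y \<in> {c..d}" for x y
    by (intro integrable_continuous_real continuous_on_subset[OF assms(3)]) (use that in auto)
  have split: "integral {c..x} f + integral {x..y} f = integral {c..y} f"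
    if "x \<in> {c..d}" "y \<in> {c..d}" "x \<le> y" for x y
    by (rule Henstock_Kurzweil_Integration.integral_combine) (use that int[of c y] in auto)
  show ?thesis
    using split[of a b] split[of b a] assms(1,2)
    by (cases "a \<le> b") (auto simp: oint_def algebra_simps)
qed

lemma norm_oint_le:
  fixes f :: "real \<Rightarrow> complex"
  assumes "a \<in> {c..d}" "b \<in> {c..d}" "continuous_on {c..d} f"
    and M: "\<And>x. x \<in> {c..d} \<Longrightarrow> norm (f x) \<le> M"
  shows "norm (oint a b f) \<le> M * \<bar>b - a\<bar>"
proof -
  have bound: "norm (integral {x..y} f) \<le> M * (y - x)"
    if "x \<in> {c..d}" "y \<in> {c..d}" "x \<le> y" for x y
  proof -
    have "f integrable_on {x..y}"
      by (intro integrable_continuous_real continuous_on_subset[OF assms(3)]) (use that in auto)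
    moreover have "0 \<le> M"
      using M[of x] that norm_ge_zero order_trans by blast
    ultimately have "norm (integral {x..y} f) \<le> M * Henstock_Kurzweil_Integration.content (cbox x y)"
      by (intro has_integral_bound[of M]) (use M that in auto)
    thus ?thesis using that by simp
  qed
  show ?thesis
    using bound[of a b] bound[of b a] assms(1,2) by (cases "a \<le> b") (auto simp: oint_def)
qed

lemma has_vector_derivative_oint_upper:
  fixes G Gd :: "real \<Rightarrow> real \<Rightarrow> complex"
  assumes G_cont: "continuous_on (Ivl \<times> Ivl) (\<lambda>p. G (fst p) (snd p))"
    and G_deriv: "\<And>z x. z \<in> Ivl \<Longrightarrow> x \<in> Ivl \<Longrightarrow>
      ((\<lambda>z'. G z' x) has_vector_derivative Gd z x) (at z within Ivl)"
    and Gd_cont: "continuous_on (Ivl \<times> Ivl) (\<lambda>p. Gd (fst p) (snd p))"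
    and y: "y \<in> Ivl" and z: "z \<in> Ivl"
  shows "((\<lambda>z'. oint y z' (G z')) has_vector_derivative G z z + oint y z (Gd z)) (at z within Ivl)"
proof -
  have param: "((\<lambda>z'. integral {-1..c} (G z')) has_vector_derivative integral {-1..c} (Gd z))
      (at z within Ivl)" if c: "c \<in> Ivl" for c
  proof (rule leibniz_rule_vector_derivative_interval)
    show "G z' integrable_on {-1..c}" if "z' \<in> Ivl" for z'
      by (intro integrable_continuous_real continuous_on_subset[OF continuous_on_kernel_slice[OF G_cont that]])
         (use c in auto)
  qed (use c z G_deriv in \<open>auto intro: continuous_on_subset[OF Gd_cont]\<close>)
  have "((\<lambda>x. integral {-1..x} (G x)) has_vector_derivative G z z + integral {-1..z} (Gd z))
      (at z within Ivl)"
  proof (rule has_vector_derivative_diagonal[where f="\<lambda>x y. integral {-1..x} (G y)"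
      and fs="\<lambda>x y. G y x"])
    show "continuous_on (Ivl \<times> Ivl) (\<lambda>p. G (snd p) (fst p))"
      by (rule continuous_on_kernel_compose[OF G_cont]) (auto intro: continuous_intros)
  qed (use z param integral_has_vector_derivative[OF continuous_on_kernel_slice[OF G_cont]] in auto)
  from has_vector_derivative_diff[OF this param[OF y]]
  have "((\<lambda>x. integral {-1..x} (G x) - integral {-1..y} (G x)) has_vector_derivative
      G z z + integral {-1..z} (Gd z) - integral {-1..y} (Gd z)) (at z within Ivl)" .
  also have "G z z + integral {-1..z} (Gd z) - integral {-1..y} (Gd z) = G z z + oint y z (Gd z)"
    using oint_eq_integral_diff[OF y z continuous_on_kernel_slice[OF Gd_cont z]] by simp
  finally have "((\<lambda>x. integral {-1..x} (G x) - integral {-1..y} (G x)) has_vector_derivative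
      G z z + oint y z (Gd z)) (at z within Ivl)" .
  thus ?thesis
    by (rule has_vector_derivative_transform[OF z, rotated])
       (use oint_eq_integral_diff[OF y _ continuous_on_kernel_slice[OF G_cont]] in auto)
qed

lemma has_vector_derivative_oint_lower:
  fixes G Gd :: "real \<Rightarrow> real \<Rightarrow> complex"
  assumes "continuous_on (Ivl \<times> Ivl) (\<lambda>p. G (fst p) (snd p))"
    and "\<And>z x. z \<in> Ivl \<Longrightarrow> x \<in> Ivl \<Longrightarrow>
      ((\<lambda>z'. G z' x) has_vector_derivative Gd z x) (at z within Ivl)"
    and "continuous_on (Ivl \<times> Ivl) (\<lambda>p. Gd (fst p) (snd p))"
    and "y \<in> Ivl" "z \<in> Ivl"
  shows "((\<lambda>z'. oint z' y (G z')) has_vector_derivative - G z z + oint z y (Gd z)) (at z within Ivl)"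
  using has_vector_derivative_minus[OF has_vector_derivative_oint_upper[OF assms]]
  by (simp add: oint_reverse[of _ y])

lemma continuous_on_Times_Lipschitz_first:
  fixes f :: "real \<Rightarrow> 'p::metric_space \<Rightarrow> 'a::real_normed_vector"
  assumes cont: "\<And>y. y \<in> S \<Longrightarrow> continuous_on U (f y)"
    and Lipschitz: "\<And>y y' p. y \<in> S \<Longrightarrow> y' \<in> S \<Longrightarrow> p \<in> U \<Longrightarrow> norm (f y' p - f y p) \<le> B * \<bar>y' - y\<bar>"
  shows "continuous_on (S \<times> U) (\<lambda>q. f (fst q) (snd q))"
  unfolding continuous_on_iff
proof (intro ballI allI impI)
  fix q e assume q: "q \<in> S \<times> U" and e: "(0::real) < e"
  obtain y p where q_eq: "q = (y, p)" and y: "y \<in> S" and p: "p \<in> U" using q by auto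
  from cont[OF y, unfolded continuous_on_iff, rule_format, OF p, of "e/2"] e
  obtain d where d: "d > 0" "\<And>p'. p' \<in> U \<Longrightarrow> dist p' p < d \<Longrightarrow> dist (f y p') (f y p) < e/2"
    by auto
  define \<delta> where "\<delta> = min d (e / (2 * (\<bar>B\<bar> + 1)))"
  show "\<exists>\<delta>>0. \<forall>q'\<in>S \<times> U. dist q' q < \<delta> \<longrightarrow> dist (f (fst q') (snd q')) (f (fst q) (snd q)) < e"
  proof (intro exI[of _ \<delta>] conjI ballI impI)
    show "\<delta> > 0" using d e by (simp add: \<delta>_def)
    fix q' assume q': "q' \<in> S \<times> U" and dq: "dist q' q < \<delta>"
    obtain y' p' where q'_eq: "q' = (y', p')" and y': "y' \<in> S" and p': "p' \<in> U" using q' by auto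
    have dy: "\<bar>y' - y\<bar> < e / (2 * (\<bar>B\<bar> + 1))"
      using dq dist_fst_le[of q' q] by (simp add: q'_eq q_eq dist_real_def \<delta>_def)
    have "norm (f y' p' - f y p') \<le> \<bar>B\<bar> * \<bar>y' - y\<bar>"
      using Lipschitz[OF y y' p'] abs_ge_self[of B] by (meson abs_ge_zero mult_right_mono order_trans)
    also have "\<dots> \<le> \<bar>B\<bar> * (e / (2 * (\<bar>B\<bar> + 1)))"
      using dy by (intro mult_left_mono) auto
    also have "\<dots> < e/2"
      using e by (simp add: field_simps)
    finally have "norm (f y' p' - f y p') < e/2" .
    moreover have "norm (f y p' - f y p) < e/2"
      using d(2)[OF p'] dq dist_snd_le[of q' q] by (simp add: q'_eq q_eq \<delta>_def dist_norm)
    ultimately show "dist (f (fst q') (snd q')) (f (fst q) (snd q)) < e"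
      using norm_triangle_lt[of "f y' p' - f y p'" "f y p' - f y p" e]
      by (simp add: q'_eq q_eq dist_norm)
  qed
qed

lemma continuous_on_oint_kernel:
  fixes A B :: "real \<Rightarrow> real \<Rightarrow> complex"
  assumes A: "continuous_on (Ivl \<times> Ivl) (\<lambda>p. A (fst p) (snd p))"
    and B: "continuous_on (Ivl \<times> Ivl) (\<lambda>p. B (fst p) (snd p))"
  shows "continuous_on (Ivl \<times> Ivl) (\<lambda>p. oint (snd p) (fst p) (\<lambda>x. A (fst p) x * B x (snd p)))"
proof -
  define g where "g = (\<lambda>(p::real \<times> real) x. A (fst p) x * B x (snd p))"
  define \<Phi> where "\<Phi> = (\<lambda>y p. integral {-1..y} (g p))"
  have g_cont: "continuous_on ((Ivl \<times> Ivl) \<times> Ivl) (\<lambda>q. g (fst q) (snd q))"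
    unfolding g_def
    by (intro continuous_intros continuous_on_kernel_compose[OF A] continuous_on_kernel_compose[OF B])
       auto
  obtain M where M: "\<And>q. q \<in> (Ivl \<times> Ivl) \<times> Ivl \<Longrightarrow> norm (g (fst q) (snd q)) \<le> M"
    using continuous_on_compact_bounded[OF g_cont] by (metis compact_Times compact_Icc)
  have g_slice: "continuous_on Ivl (g p)" if "p \<in> Ivl \<times> Ivl" for p
    by (rule continuous_on_kernel_slice[OF g_cont that])
  have \<Phi>_cont: "continuous_on (Ivl \<times> (Ivl \<times> Ivl)) (\<lambda>q. \<Phi> (fst q) (snd q))"
  proof (rule continuous_on_Times_Lipschitz_first)
    fix y assume "y \<in> Ivl"
    hence "continuous_on ((Ivl \<times> Ivl) \<times> {-1..y}) (\<lambda>q. g (fst q) (snd q))"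
      by (intro continuous_on_subset[OF g_cont]) auto
    thus "continuous_on (Ivl \<times> Ivl) (\<Phi> y)"
      unfolding \<Phi>_def using integral_continuous_on_param[of "Ivl \<times> Ivl" "-1" y g]
      by (simp add: split_beta)
  next
    fix y y' p assume "y \<in> Ivl" "y' \<in> Ivl" "p \<in> Ivl \<times> Ivl"
    thus "norm (\<Phi> y' p - \<Phi> y p) \<le> M * \<bar>y' - y\<bar>"
      using oint_eq_integral_diff[of y "-1" 1 y' "g p"] norm_oint_le[of y "-1" 1 y' "g p" M] g_slice M
      by (auto simp: \<Phi>_def)
  qed
  have "continuous_on (Ivl \<times> Ivl) (\<lambda>p. \<Phi> (fst p) p - \<Phi> (snd p) p)"
    by (intro continuous_intros continuous_on_kernel_compose[OF \<Phi>_cont]) auto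
  moreover have "oint (snd p) (fst p) (\<lambda>x. A (fst p) x * B x (snd p)) = \<Phi> (fst p) p - \<Phi> (snd p) p"
    if "p \<in> Ivl \<times> Ivl" for p
    using oint_eq_integral_diff[of "snd p" "-1" 1 "fst p" "g p"] g_slice[OF that] that
    by (auto simp: \<Phi>_def g_def)
  ultimately show ?thesis using continuous_on_eq by (metis (no_types, lifting))
qed

section \<open>Symbolic derivatives of \<open>J\<close>\<close>

(* Prod c a1 b1 u1 v1 a2 b2 u2 v2 stands for c * K^(a1,b1)(x1,y1) * P^(a2,b2)(x2,y2), where each
   of x1, y1, x2, y2 is s or t according to u1, v1, u2, v2 (True meaning s);
   Integ c a b stands for c * int_t^s K^(a,0)(s,x) P^(0,b)(x,t) dx. *)
datatype kterm = Prod int nat nat bool bool nat nat bool bool | Integ int nat nat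

definition pick :: "bool \<Rightarrow> real \<Rightarrow> real \<Rightarrow> real" where
  "pick u s t = (if u then s else t)"

fun eval_kterm :: "kern \<Rightarrow> kern \<Rightarrow> kterm \<Rightarrow> real \<Rightarrow> real \<Rightarrow> complex" where
  "eval_kterm K P (Prod c a1 b1 u1 v1 a2 b2 u2 v2) s t =
     of_int c * mixed a1 b1 K (pick u1 s t) (pick v1 s t) * mixed a2 b2 P (pick u2 s t) (pick v2 s t)"
| "eval_kterm K P (Integ c a b) s t = of_int c * oint t s (\<lambda>x. mixed a 0 K s x * mixed 0 b P x t)"

definition eval_kterms :: "kern \<Rightarrow> kern \<Rightarrow> kterm list \<Rightarrow> real \<Rightarrow> real \<Rightarrow> complex" where
  "eval_kterms K P ts s t = (\<Sum>\<tau>\<leftarrow>ts. eval_kterm K P \<tau> s t)"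

(* deriv_kterm True differentiates in s, deriv_kterm False in t; on Integ the Prod summand comes
   from the variable integration limit. *)
fun deriv_kterm :: "bool \<Rightarrow> kterm \<Rightarrow> kterm list" where
  "deriv_kterm w (Prod c a1 b1 u1 v1 a2 b2 u2 v2) =
     (if u1 = w then [Prod c (Suc a1) b1 u1 v1 a2 b2 u2 v2] else []) @
     (if v1 = w then [Prod c a1 (Suc b1) u1 v1 a2 b2 u2 v2] else []) @
     (if u2 = w then [Prod c a1 b1 u1 v1 (Suc a2) b2 u2 v2] else []) @
     (if v2 = w then [Prod c a1 b1 u1 v1 a2 (Suc b2) u2 v2] else [])"
| "deriv_kterm w (Integ c a b) =
     (if w then [Prod c a 0 True True 0 b True False, Integ c (Suc a) b]
      else [Prod (-c) a 0 True False 0 b False False, Integ c a (Suc b)])"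

definition deriv_kterms :: "bool \<Rightarrow> kterm list \<Rightarrow> kterm list" where
  "deriv_kterms w ts = concat (map (deriv_kterm w) ts)"

definition s_order :: "bool \<Rightarrow> bool \<Rightarrow> nat \<Rightarrow> nat \<Rightarrow> nat" where
  "s_order u v a b = (if u then a else 0) + (if v then b else 0)"

definition t_order :: "bool \<Rightarrow> bool \<Rightarrow> nat \<Rightarrow> nat \<Rightarrow> nat" where
  "t_order u v a b = (if u then 0 else a) + (if v then 0 else b)"

(* Invariant of the terms of d_s^p d_t^q J: each factor is differentiated at most p times through
   arguments equal to s and at most q times through arguments equal to t, and P at most p + q - 1
   times in total; the last condition yields the decay on the diagonal. *)
fun admissible :: "nat \<Rightarrow> nat \<Rightarrow> kterm \<Rightarrow> bool" where
  "admissible p q (Prod c a1 b1 u1 v1 a2 b2 u2 v2) \<longleftrightarrow>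
     s_order u1 v1 a1 b1 \<le> p \<and> t_order u1 v1 a1 b1 \<le> q \<and>
     s_order u2 v2 a2 b2 \<le> p \<and> t_order u2 v2 a2 b2 \<le> q \<and> a2 + b2 + 1 \<le> p + q"
| "admissible p q (Integ c a b) \<longleftrightarrow> a \<le> p \<and> b \<le> q"

lemma eval_kterms_Nil [simp]: "eval_kterms K P [] s t = 0"
  by (simp add: eval_kterms_def)

lemma eval_kterms_Cons [simp]: "eval_kterms K P (\<tau> # ts) s t = eval_kterm K P \<tau> s t + eval_kterms K P ts s t"
  by (simp add: eval_kterms_def)

lemma eval_kterms_append [simp]:
  "eval_kterms K P (ts @ ts') s t = eval_kterms K P ts s t + eval_kterms K P ts' s t"
  by (simp add: eval_kterms_def)

lemma deriv_kterms_Nil [simp]: "deriv_kterms w [] = []"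
  by (simp add: deriv_kterms_def)

lemma deriv_kterms_Cons [simp]: "deriv_kterms w (\<tau> # ts) = deriv_kterm w \<tau> @ deriv_kterms w ts"
  by (simp add: deriv_kterms_def)

lemma admissible_deriv_kterms_s:
  "\<forall>\<tau>\<in>set ts. admissible p q \<tau> \<Longrightarrow> \<forall>\<tau>\<in>set (deriv_kterms True ts). admissible (Suc p) q \<tau>"
proof -
  have "admissible (Suc p) q \<tau>'" if "admissible p q \<tau>" "\<tau>' \<in> set (deriv_kterm True \<tau>)" for \<tau> \<tau>'
    using that by (cases \<tau>) (auto simp: s_order_def t_order_def split: if_splits)
  thus "\<forall>\<tau>\<in>set ts. admissible p q \<tau> \<Longrightarrow> \<forall>\<tau>\<in>set (deriv_kterms True ts). admissible (Suc p) q \<tau>"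
    by (auto simp: deriv_kterms_def)
qed

lemma admissible_deriv_kterms_t:
  "\<forall>\<tau>\<in>set ts. admissible p q \<tau> \<Longrightarrow> \<forall>\<tau>\<in>set (deriv_kterms False ts). admissible p (Suc q) \<tau>"
proof -
  have "admissible p (Suc q) \<tau>'" if "admissible p q \<tau>" "\<tau>' \<in> set (deriv_kterm False \<tau>)" for \<tau> \<tau>'
    using that by (cases \<tau>) (auto simp: s_order_def t_order_def split: if_splits)
  thus "\<forall>\<tau>\<in>set ts. admissible p q \<tau> \<Longrightarrow> \<forall>\<tau>\<in>set (deriv_kterms False ts). admissible p (Suc q) \<tau>"
    by (auto simp: deriv_kterms_def)
qed

lemma has_vector_derivative_Prod_s:
  assumes K: "Cm m K" and P: "Cm m P" and adm: "admissible p q (Prod c a1 b1 u1 v1 a2 b2 u2 v2)"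
    and pq: "p < m" "q \<le> m" and s: "s \<in> Ivl" and t: "t \<in> Ivl"
  shows "((\<lambda>s'. eval_kterm K P (Prod c a1 b1 u1 v1 a2 b2 u2 v2) s' t) has_vector_derivative
          eval_kterms K P (deriv_kterm True (Prod c a1 b1 u1 v1 a2 b2 u2 v2)) s t) (at s within Ivl)"
proof -
  have "a1 \<le> m \<and> b1 \<le> m \<and> (u1 \<longrightarrow> a1 < m) \<and> (v1 \<longrightarrow> b1 < m)"
    "a2 \<le> m \<and> b2 \<le> m \<and> (u2 \<longrightarrow> a2 < m) \<and> (v2 \<longrightarrow> b2 < m)"
    using adm pq by (auto simp: s_order_def t_order_def split: if_splits)
  from has_vector_derivative_mult[OF has_vector_derivative_mult_right
      [OF Cm_has_vector_derivative_mixed_along[OF K s t t, of a1 b1 u1 v1]]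
      Cm_has_vector_derivative_mixed_along[OF P s t t, of a2 b2 u2 v2]] this
  show ?thesis
    by (cases u1; cases v1; cases u2; cases v2) (simp_all add: pick_def algebra_simps)
qed

lemma has_vector_derivative_Prod_t:
  assumes K: "Cm m K" and P: "Cm m P" and adm: "admissible p q (Prod c a1 b1 u1 v1 a2 b2 u2 v2)"
    and pq: "p \<le> m" "q < m" and s: "s \<in> Ivl" and t: "t \<in> Ivl"
  shows "((\<lambda>t'. eval_kterm K P (Prod c a1 b1 u1 v1 a2 b2 u2 v2) s t') has_vector_derivative
          eval_kterms K P (deriv_kterm False (Prod c a1 b1 u1 v1 a2 b2 u2 v2)) s t) (at t within Ivl)"
proof -
  have "a1 \<le> m \<and> b1 \<le> m \<and> (\<not> u1 \<longrightarrow> a1 < m) \<and> (\<not> v1 \<longrightarrow> b1 < m)"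
    "a2 \<le> m \<and> b2 \<le> m \<and> (\<not> u2 \<longrightarrow> a2 < m) \<and> (\<not> v2 \<longrightarrow> b2 < m)"
    using adm pq by (auto simp: s_order_def t_order_def split: if_splits)
  from has_vector_derivative_mult[OF has_vector_derivative_mult_right
      [OF Cm_has_vector_derivative_mixed_along[OF K t s s, of a1 b1 "\<not> u1" "\<not> v1"]]
      Cm_has_vector_derivative_mixed_along[OF P t s s, of a2 b2 "\<not> u2" "\<not> v2"]] this
  show ?thesis
    by (cases u1; cases v1; cases u2; cases v2) (simp_all add: pick_def algebra_simps)
qed

lemma has_vector_derivative_Integ_s:
  assumes K: "Cm m K" and P: "Cm m P" and adm: "admissible p q (Integ c a b)"
    and pq: "p < m" "q \<le> m" and s: "s \<in> Ivl" and t: "t \<in> Ivl"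
  shows "((\<lambda>s'. eval_kterm K P (Integ c a b) s' t) has_vector_derivative
          eval_kterms K P (deriv_kterm True (Integ c a b)) s t) (at s within Ivl)"
proof -
  have ab: "a < m" "b \<le> m" using adm pq by auto
  define G where "G = (\<lambda>z x. mixed a 0 K z x * mixed 0 b P x t)"
  define Gd where "Gd = (\<lambda>z x. mixed (Suc a) 0 K z x * mixed 0 b P x t)"
  have "((\<lambda>z. of_int c * oint t z (G z)) has_vector_derivative of_int c * (G s s + oint t s (Gd s)))
      (at s within Ivl)"
  proof (intro has_vector_derivative_mult_right has_vector_derivative_oint_upper[OF _ _ _ t s])
    show "continuous_on (Ivl \<times> Ivl) (\<lambda>p. G (fst p) (snd p))"
      "continuous_on (Ivl \<times> Ivl) (\<lambda>p. Gd (fst p) (snd p))" unfolding G_def Gd_def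
      by (intro continuous_intros continuous_on_kernel_compose[OF Cm_continuous_mixed[OF K]]
          continuous_on_kernel_compose[OF Cm_continuous_mixed[OF P]]; use ab t in force)+
    show "((\<lambda>z'. G z' x) has_vector_derivative Gd z x) (at z within Ivl)" if "z \<in> Ivl" "x \<in> Ivl" for z x
      unfolding G_def Gd_def
      by (rule has_vector_derivative_mult_left, rule Cm_has_ds_mixed[OF K]) (use ab that in auto)
  qed
  thus ?thesis by (simp add: G_def Gd_def pick_def algebra_simps)
qed

lemma has_vector_derivative_Integ_t:
  assumes K: "Cm m K" and P: "Cm m P" and adm: "admissible p q (Integ c a b)"
    and pq: "p \<le> m" "q < m" and s: "s \<in> Ivl" and t: "t \<in> Ivl"
  shows "((\<lambda>t'. eval_kterm K P (Integ c a b) s t') has_vector_derivative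
          eval_kterms K P (deriv_kterm False (Integ c a b)) s t) (at t within Ivl)"
proof -
  have ab: "a \<le> m" "b < m" using adm pq by auto
  define G where "G = (\<lambda>z x. mixed a 0 K s x * mixed 0 b P x z)"
  define Gd where "Gd = (\<lambda>z x. mixed a 0 K s x * mixed 0 (Suc b) P x z)"
  have "((\<lambda>z. of_int c * oint z s (G z)) has_vector_derivative of_int c * (- G t t + oint t s (Gd t)))
      (at t within Ivl)"
  proof (intro has_vector_derivative_mult_right has_vector_derivative_oint_lower[OF _ _ _ s t])
    show "continuous_on (Ivl \<times> Ivl) (\<lambda>p. G (fst p) (snd p))"
      "continuous_on (Ivl \<times> Ivl) (\<lambda>p. Gd (fst p) (snd p))" unfolding G_def Gd_def
      by (intro continuous_intros continuous_on_kernel_compose[OF Cm_continuous_mixed[OF K]]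
          continuous_on_kernel_compose[OF Cm_continuous_mixed[OF P]]; use ab s in force)+
    show "((\<lambda>z'. G z' x) has_vector_derivative Gd z x) (at z within Ivl)" if "z \<in> Ivl" "x \<in> Ivl" for z x
      unfolding G_def Gd_def
      by (rule has_vector_derivative_mult_right, rule Cm_has_dt_mixed[OF P]) (use ab that in auto)
  qed
  thus ?thesis by (simp add: G_def Gd_def pick_def algebra_simps)
qed

lemma has_vector_derivative_eval_kterms_s:
  assumes "Cm m K" "Cm m P" "\<forall>\<tau>\<in>set ts. admissible p q \<tau>" "p < m" "q \<le> m" "s \<in> Ivl" "t \<in> Ivl"
  shows "((\<lambda>s'. eval_kterms K P ts s' t) has_vector_derivative eval_kterms K P (deriv_kterms True ts) s t)
    (at s within Ivl)"
proof -
  have "((\<lambda>s'. eval_kterm K P \<tau> s' t) has_vector_derivative eval_kterms K P (deriv_kterm True \<tau>) s t)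
      (at s within Ivl)" if "admissible p q \<tau>" for \<tau>
    using that assms by (cases \<tau>) (blast intro: has_vector_derivative_Prod_s has_vector_derivative_Integ_s)+
  with assms(3) show ?thesis
    by (induction ts) (auto intro!: has_vector_derivative_add)
qed

lemma has_vector_derivative_eval_kterms_t:
  assumes "Cm m K" "Cm m P" "\<forall>\<tau>\<in>set ts. admissible p q \<tau>" "p \<le> m" "q < m" "s \<in> Ivl" "t \<in> Ivl"
  shows "((\<lambda>t'. eval_kterms K P ts s t') has_vector_derivative eval_kterms K P (deriv_kterms False ts) s t)
    (at t within Ivl)"
proof -
  have "((\<lambda>t'. eval_kterm K P \<tau> s t') has_vector_derivative eval_kterms K P (deriv_kterm False \<tau>) s t)
      (at t within Ivl)" if "admissible p q \<tau>" for \<tau>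
    using that assms by (cases \<tau>) (blast intro: has_vector_derivative_Prod_t has_vector_derivative_Integ_t)+
  with assms(3) show ?thesis
    unfolding eval_kterms_def deriv_kterms_def
    by (induction ts) (auto intro!: has_vector_derivative_add)
qed

lemma continuous_on_eval_kterms:
  assumes K: "Cm m K" and P: "Cm m P" and adm: "\<forall>\<tau>\<in>set ts. admissible p q \<tau>" and pq: "p \<le> m" "q \<le> m"
  shows "continuous_on (Ivl \<times> Ivl) (\<lambda>z. eval_kterms K P ts (fst z) (snd z))"
proof -
  have pick_cont: "continuous_on (Ivl \<times> Ivl) (\<lambda>z. pick u (fst z) (snd z))" for u
    by (cases u) (auto simp: pick_def intro: continuous_intros)
  have pick_Ivl: "(\<lambda>z. pick u (fst z) (snd z)) ` (Ivl \<times> Ivl) \<subseteq> Ivl" for u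
    by (cases u) (auto simp: pick_def)
  have "continuous_on (Ivl \<times> Ivl) (\<lambda>z. eval_kterm K P \<tau> (fst z) (snd z))" if "admissible p q \<tau>" for \<tau>
  proof (cases \<tau>)
    case (Prod c a1 b1 u1 v1 a2 b2 u2 v2)
    have "a1 \<le> m" "b1 \<le> m" "a2 \<le> m" "b2 \<le> m"
      using that pq Prod by (auto simp: s_order_def t_order_def split: if_splits)
    thus ?thesis unfolding Prod eval_kterm.simps
      by (intro continuous_intros continuous_on_kernel_compose[OF Cm_continuous_mixed[OF K]]
          continuous_on_kernel_compose[OF Cm_continuous_mixed[OF P]] pick_cont pick_Ivl)
  next
    case (Integ c a b)
    hence "a \<le> m" "b \<le> m" using that pq by auto
    thus ?thesis unfolding Integ eval_kterm.simps
      by (intro continuous_intros continuous_on_oint_kernel Cm_continuous_mixed[OF K] Cm_continuous_mixed[OF P])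
         auto
  qed
  with adm show ?thesis
    by (induction ts) (auto intro!: continuous_intros)
qed

section \<open>Uniform and diagonal bounds\<close>

definition mixed_norm_bound :: "nat \<Rightarrow> kern \<Rightarrow> real \<Rightarrow> bool" where
  "mixed_norm_bound m L B \<longleftrightarrow> (\<forall>a\<le>m. \<forall>b\<le>m. \<forall>s\<in>Ivl. \<forall>t\<in>Ivl. norm (mixed a b L s t) \<le> B)"

lemma Cm_mixed_norm_bound:
  assumes "Cm m L"
  shows "\<exists>B\<ge>0. mixed_norm_bound m L B"
proof -
  have "\<exists>M. \<forall>s\<in>Ivl. \<forall>t\<in>Ivl. norm (mixed a b L s t) \<le> M" if "a \<le> m" "b \<le> m" for a b
    using continuous_on_compact_bounded[OF Cm_continuous_mixed[OF assms that]] compact_Times[of Ivl Ivl]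
    by auto
  then obtain B where B: "\<And>a b s t. a \<le> m \<Longrightarrow> b \<le> m \<Longrightarrow> s \<in> Ivl \<Longrightarrow> t \<in> Ivl \<Longrightarrow>
      norm (mixed a b L s t) \<le> B a b"
    by metis
  define M where "M = Max ((\<lambda>(a, b). B a b) ` ({..m} \<times> {..m}))"
  have B_le_M: "B a b \<le> M" if "a \<le> m" "b \<le> m" for a b
    unfolding M_def using that by (intro Max_ge) auto
  have "norm (mixed 0 0 L 0 0) \<le> B 0 0"
    by (rule B) auto
  hence "0 \<le> M"
    using B_le_M[of 0 0] norm_ge_zero[of "mixed 0 0 L 0 0"] by linarith
  thus ?thesis
    unfolding mixed_norm_bound_def using B B_le_M by (meson order_trans)
qed

fun coeff_abs :: "kterm \<Rightarrow> real" where
  "coeff_abs (Prod c a1 b1 u1 v1 a2 b2 u2 v2) = \<bar>of_int c\<bar>"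
| "coeff_abs (Integ c a b) = \<bar>of_int c\<bar>"

definition weight :: "kterm list \<Rightarrow> real" where
  "weight ts = (\<Sum>\<tau>\<leftarrow>ts. coeff_abs \<tau>)"

lemma weight_nonneg: "0 \<le> weight ts"
proof -
  have "0 \<le> coeff_abs \<tau>" for \<tau> by (cases \<tau>) auto
  thus ?thesis unfolding weight_def by (induction ts) auto
qed

lemma norm_eval_kterm_le:
  assumes K: "Cm m K" and P: "Cm m P" and adm: "admissible p q \<tau>" and pq: "p \<le> m" "q \<le> m"
    and BK: "mixed_norm_bound m K BK" and BP: "mixed_norm_bound m P BP" and B0: "0 \<le> BK" "0 \<le> BP"
    and s: "s \<in> Ivl" and t: "t \<in> Ivl"
  shows "norm (eval_kterm K P \<tau> s t) \<le> 2 * coeff_abs \<tau> * BK * BP"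
proof (cases \<tau>)
  case (Prod c a1 b1 u1 v1 a2 b2 u2 v2)
  have "a1 \<le> m" "b1 \<le> m" "a2 \<le> m" "b2 \<le> m"
    using adm pq Prod by (auto simp: s_order_def t_order_def split: if_splits)
  moreover have "pick u s t \<in> Ivl" for u using s t by (simp add: pick_def)
  ultimately have "\<bar>of_int c\<bar> * norm (mixed a1 b1 K (pick u1 s t) (pick v1 s t))
      * norm (mixed a2 b2 P (pick u2 s t) (pick v2 s t)) \<le> \<bar>of_int c\<bar> * BK * BP"
    using BK BP B0 unfolding mixed_norm_bound_def by (intro mult_mono mult_left_mono) auto
  also have "\<dots> \<le> 2 * \<bar>of_int c\<bar> * BK * BP"
    using B0 by (simp add: mult_nonneg_nonneg)
  finally show ?thesis by (simp add: Prod norm_mult)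
next
  case (Integ c a b)
  have ab: "a \<le> m" "b \<le> m" using adm pq Integ by auto
  have "continuous_on Ivl (\<lambda>x. mixed a 0 K s x * mixed 0 b P x t)"
    by (intro continuous_intros continuous_on_kernel_compose[OF Cm_continuous_mixed[OF K]]
        continuous_on_kernel_compose[OF Cm_continuous_mixed[OF P]]) (use ab s t in auto)
  hence "norm (oint t s (\<lambda>x. mixed a 0 K s x * mixed 0 b P x t)) \<le> BK * BP * \<bar>s - t\<bar>"
    using ab s t BK BP B0 unfolding mixed_norm_bound_def
    by (intro norm_oint_le[OF t s]) (auto simp: norm_mult intro!: mult_mono)
  also have "\<dots> \<le> BK * BP * 2" using s t B0 by (intro mult_left_mono) auto
  finally have "\<bar>of_int c\<bar> * norm (oint t s (\<lambda>x. mixed a 0 K s x * mixed 0 b P x t))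
      \<le> \<bar>of_int c\<bar> * (BK * BP * 2)"
    by (rule mult_left_mono) simp
  thus ?thesis by (simp add: Integ norm_mult algebra_simps)
qed

lemma norm_eval_kterms_le:
  assumes "Cm m K" "Cm m P" "\<forall>\<tau>\<in>set ts. admissible p q \<tau>" "p \<le> m" "q \<le> m"
    and "mixed_norm_bound m K BK" "mixed_norm_bound m P BP" "0 \<le> BK" "0 \<le> BP"
    and "s \<in> Ivl" "t \<in> Ivl"
  shows "norm (eval_kterms K P ts s t) \<le> 2 * weight ts * BK * BP"
  using assms(3)
proof (induction ts)
  case (Cons \<tau> ts)
  have "norm (eval_kterms K P (\<tau> # ts) s t) \<le> norm (eval_kterm K P \<tau> s t) + norm (eval_kterms K P ts s t)"
    by (simp add: norm_triangle_ineq)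
  also have "\<dots> \<le> 2 * coeff_abs \<tau> * BK * BP + 2 * weight ts * BK * BP"
    using Cons norm_eval_kterm_le[OF assms(1,2) _ assms(4-11)] by (intro add_mono) auto
  finally show ?case by (simp add: weight_def algebra_simps)
qed (simp add: weight_def)

lemma norm_eval_kterm_diagonal_le:
  assumes adm: "admissible p q \<tau>" and pq: "p \<le> m" "q \<le> m" "p + q \<le> N"
    and BK: "mixed_norm_bound m K BK" "0 \<le> BK" and cd: "0 \<le> cd" and \<kappa>: "1 \<le> \<kappa>"
    and decay: "\<And>i j s. i + j + 1 \<le> N \<Longrightarrow> s \<in> Ivl \<Longrightarrow>
        norm (mixed i j P s s) \<le> cd * \<kappa> powr (- (real N - real i - real j - 1))"
    and s: "s \<in> Ivl"
  shows "norm (eval_kterm K P \<tau> s s) \<le> coeff_abs \<tau> * BK * cd * \<kappa> powr (- (real N - real p - real q))"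
proof (cases \<tau>)
  case (Prod c a1 b1 u1 v1 a2 b2 u2 v2)
  have "a1 \<le> m" "b1 \<le> m" using adm pq Prod by (auto simp: s_order_def t_order_def split: if_splits)
  hence K_bound: "norm (mixed a1 b1 K s s) \<le> BK" using BK s by (auto simp: mixed_norm_bound_def)
  have P_order: "a2 + b2 + 1 \<le> p + q" using adm Prod by auto
  have "norm (mixed a2 b2 P s s) \<le> cd * \<kappa> powr (- (real N - real a2 - real b2 - 1))"
    using decay[OF _ s, of a2 b2] P_order pq by auto
  also have "\<dots> \<le> cd * \<kappa> powr (- (real N - real p - real q))"
    using P_order \<kappa> by (intro mult_left_mono cd powr_mono) auto
  finally have "norm (mixed a2 b2 P s s) \<le> cd * \<kappa> powr (- (real N - real p - real q))" .
  with K_bound BK(2) have "\<bar>of_int c\<bar> * norm (mixed a1 b1 K s s) * norm (mixed a2 b2 P s s)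
      \<le> \<bar>of_int c\<bar> * BK * (cd * \<kappa> powr (- (real N - real p - real q)))"
    by (intro mult_mono mult_left_mono) auto
  thus ?thesis by (simp add: Prod pick_def norm_mult algebra_simps)
qed (use BK cd in simp)

lemma norm_eval_kterms_diagonal_le:
  assumes "\<forall>\<tau>\<in>set ts. admissible p q \<tau>" "p \<le> m" "q \<le> m" "p + q \<le> N"
    and "mixed_norm_bound m K BK" "0 \<le> BK" "0 \<le> cd" "1 \<le> \<kappa>"
    and "\<And>i j s. i + j + 1 \<le> N \<Longrightarrow> s \<in> Ivl \<Longrightarrow>
        norm (mixed i j P s s) \<le> cd * \<kappa> powr (- (real N - real i - real j - 1))"
    and "s \<in> Ivl"
  shows "norm (eval_kterms K P ts s s) \<le> weight ts * BK * cd * \<kappa> powr (- (real N - real p - real q))"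
  using assms(1)
proof (induction ts)
  case (Cons \<tau> ts)
  have "norm (eval_kterms K P (\<tau> # ts) s s) \<le> norm (eval_kterm K P \<tau> s s) + norm (eval_kterms K P ts s s)"
    by (simp add: norm_triangle_ineq)
  also have "\<dots> \<le> coeff_abs \<tau> * BK * cd * \<kappa> powr (- (real N - real p - real q))
       + weight ts * BK * cd * \<kappa> powr (- (real N - real p - real q))"
    using Cons norm_eval_kterm_diagonal_le[OF _ assms(2-10)] by (intro add_mono) auto
  finally show ?case by (simp add: weight_def algebra_simps)
qed (simp add: weight_def)

definition mixed_kterms :: "kterm list \<Rightarrow> nat \<Rightarrow> nat \<Rightarrow> kterm list" where
  "mixed_kterms ts a b = (deriv_kterms True ^^ a) ((deriv_kterms False ^^ b) ts)"

lemma mixed_kterms_Suc_left: "mixed_kterms ts (Suc a) b = deriv_kterms True (mixed_kterms ts a b)"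
  by (simp add: mixed_kterms_def)

lemma mixed_kterms_Suc_right: "mixed_kterms ts 0 (Suc b) = deriv_kterms False (mixed_kterms ts 0 b)"
  by (simp add: mixed_kterms_def)

lemma admissible_mixed_kterms:
  assumes "\<forall>\<tau>\<in>set ts. admissible 0 0 \<tau>"
  shows "\<forall>\<tau>\<in>set (mixed_kterms ts a b). admissible a b \<tau>"
proof -
  have "\<forall>\<tau>\<in>set (mixed_kterms ts 0 b). admissible 0 b \<tau>"
    using assms by (induction b) (auto simp: mixed_kterms_def dest: admissible_deriv_kterms_t)
  thus ?thesis
    by (induction a) (auto simp: mixed_kterms_Suc_left dest: admissible_deriv_kterms_s)
qed

lemma vector_derivative_Ivl_eqI:
  fixes f g :: "real \<Rightarrow> complex"
  assumes "x \<in> Ivl" "\<And>y. y \<in> Ivl \<Longrightarrow> g y = f y" "(f has_vector_derivative d) (at x within Ivl)"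
  shows "vector_derivative g (at x within Ivl) = d"
  using vector_derivative_within_closed_interval[of "-1" 1 x g d]
    has_vector_derivative_transform[OF assms] assms(1) by simp

context
  fixes K P :: kern and ts :: "kterm list" and m :: nat
  assumes K: "Cm m K" and P: "Cm m P" and adm: "\<forall>\<tau>\<in>set ts. admissible 0 0 \<tau>"
begin

lemma dt_eval_kterms:
  "b \<le> m \<Longrightarrow> s \<in> Ivl \<Longrightarrow> t \<in> Ivl \<Longrightarrow> dt b (eval_kterms K P ts) s t = eval_kterms K P (mixed_kterms ts 0 b) s t"
proof (induction b arbitrary: s t)
  case 0 thus ?case by (simp add: mixed_kterms_def)
next
  case (Suc b)
  have "vector_derivative (\<lambda>t'. dt b (eval_kterms K P ts) s t') (at t within Ivl)
      = eval_kterms K P (deriv_kterms False (mixed_kterms ts 0 b)) s t"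
    by (rule vector_derivative_Ivl_eqI[OF Suc.prems(3) _ has_vector_derivative_eval_kterms_t
          [OF K P admissible_mixed_kterms[OF adm]]]) (use Suc in auto)
  thus ?case by (simp add: mixed_kterms_Suc_right)
qed

lemma mixed_eval_kterms:
  "a \<le> m \<Longrightarrow> b \<le> m \<Longrightarrow> s \<in> Ivl \<Longrightarrow> t \<in> Ivl \<Longrightarrow>
   mixed a b (eval_kterms K P ts) s t = eval_kterms K P (mixed_kterms ts a b) s t"
proof (induction a arbitrary: s t)
  case 0 thus ?case using dt_eval_kterms by simp
next
  case (Suc a)
  have "vector_derivative (\<lambda>s'. mixed a b (eval_kterms K P ts) s' t) (at s within Ivl)
      = eval_kterms K P (deriv_kterms True (mixed_kterms ts a b)) s t"
    by (rule vector_derivative_Ivl_eqI[OF Suc.prems(3) _ has_vector_derivative_eval_kterms_s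
          [OF K P admissible_mixed_kterms[OF adm]]]) (use Suc in auto)
  thus ?case by (simp add: mixed_def mixed_kterms_Suc_left)
qed

lemma Cm_eval_kterms: "Cm m (eval_kterms K P ts)"
  unfolding Cm_def
proof (intro conjI allI impI ballI)
  fix b s t assume "b < m" "s \<in> Ivl" "t \<in> Ivl"
  thus "((\<lambda>t'. dt b (eval_kterms K P ts) s t') has_vector_derivative dt (Suc b) (eval_kterms K P ts) s t)
      (at t within Ivl)"
    using has_vector_derivative_eval_kterms_t[OF K P admissible_mixed_kterms[OF adm], of 0 b s t]
      dt_eval_kterms[of b s] dt_eval_kterms[of "Suc b" s t]
    by (auto simp: mixed_kterms_Suc_right intro: has_vector_derivative_transform)
next
  fix a b s t assume "a < m" "b \<le> m" "s \<in> Ivl" "t \<in> Ivl"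
  thus "((\<lambda>s'. mixed a b (eval_kterms K P ts) s' t) has_vector_derivative
      mixed (Suc a) b (eval_kterms K P ts) s t) (at s within Ivl)"
    using has_vector_derivative_eval_kterms_s[OF K P admissible_mixed_kterms[OF adm], of a b s t]
      mixed_eval_kterms[of a b _ t] mixed_eval_kterms[of "Suc a" b s t]
    by (auto simp: mixed_kterms_Suc_left intro: has_vector_derivative_transform)
next
  fix a b assume a: "a \<le> m" and b: "b \<le> m"
  show "continuous_on (Ivl \<times> Ivl) (\<lambda>p. mixed a b (eval_kterms K P ts) (fst p) (snd p))"
    by (rule continuous_on_eq[OF continuous_on_eval_kterms[OF K P admissible_mixed_kterms[OF adm] a b]])
       (use a b in \<open>auto simp: mixed_eval_kterms\<close>)
qed

end

lemma Cmk0_iff_mixed_norm_bound: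
  "Cmk0 m L \<longleftrightarrow> (\<forall>\<kappa>>1. Cm m (L \<kappa>)) \<and>
     (\<exists>c \<kappa>0. c > 0 \<and> \<kappa>0 > 0 \<and> (\<forall>\<kappa>. \<kappa> > 1 \<and> \<kappa> \<ge> \<kappa>0 \<longrightarrow> mixed_norm_bound m (L \<kappa>) c))"
  by (simp add: Cmk0_def mixed_norm_bound_def)

lemma weight_mixed_kterms_bounded:
  obtains W where "0 \<le> W" "\<And>a b. a \<le> m \<Longrightarrow> b \<le> m \<Longrightarrow> weight (mixed_kterms ts a b) \<le> W"
proof
  define W where "W = Max ((\<lambda>(a, b). weight (mixed_kterms ts a b)) ` ({..m} \<times> {..m}))"
  show W: "weight (mixed_kterms ts a b) \<le> W" if "a \<le> m" "b \<le> m" for a b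
    unfolding W_def using that by (intro Max_ge) auto
  show "0 \<le> W"
    using order_trans[OF weight_nonneg W[of 0 0]] by simp
qed

lemma Cmk0_eval_kterms:
  assumes K: "Cm m K" and P: "Cmk0 m Pf" and adm: "\<forall>\<tau>\<in>set ts. admissible 0 0 \<tau>"
  shows "Cmk0 m (\<lambda>\<kappa>. eval_kterms K (Pf \<kappa>) ts)"
proof -
  from P obtain cP \<kappa>0 where PC: "\<And>\<kappa>. \<kappa> > 1 \<Longrightarrow> Cm m (Pf \<kappa>)" and cP: "cP > 0" and \<kappa>0: "\<kappa>0 > 0"
    and PB: "\<And>\<kappa>. \<kappa> > 1 \<Longrightarrow> \<kappa> \<ge> \<kappa>0 \<Longrightarrow> mixed_norm_bound m (Pf \<kappa>) cP"
    unfolding Cmk0_iff_mixed_norm_bound by blast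
  obtain BK where BK: "0 \<le> BK" "mixed_norm_bound m K BK"
    using Cm_mixed_norm_bound[OF K] by blast
  obtain W where W: "0 \<le> W" "\<And>a b. a \<le> m \<Longrightarrow> b \<le> m \<Longrightarrow> weight (mixed_kterms ts a b) \<le> W"
    using weight_mixed_kterms_bounded[of m ts] by metis
  have "mixed_norm_bound m (eval_kterms K (Pf \<kappa>) ts) (2 * W * BK * cP + 1)"
    if \<kappa>: "\<kappa> > 1" "\<kappa> \<ge> \<kappa>0" for \<kappa>
    unfolding mixed_norm_bound_def
  proof (intro allI impI ballI)
    fix a b s t assume a: "a \<le> m" and b: "b \<le> m" and s: "s \<in> Ivl" and t: "t \<in> Ivl"
    have "norm (mixed a b (eval_kterms K (Pf \<kappa>) ts) s t) = norm (eval_kterms K (Pf \<kappa>) (mixed_kterms ts a b) s t)"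
      using mixed_eval_kterms[OF K PC[OF \<kappa>(1)] adm a b s t] by simp
    also have "\<dots> \<le> 2 * weight (mixed_kterms ts a b) * BK * cP"
      using cP by (intro norm_eval_kterms_le[OF K PC[OF \<kappa>(1)] admissible_mixed_kterms[OF adm]
          a b BK(2) PB[OF \<kappa>] BK(1) _ s t]) simp
    also have "\<dots> \<le> 2 * W * BK * cP"
      using W(2)[OF a b] BK cP by (intro mult_right_mono) auto
    finally show "norm (mixed a b (eval_kterms K (Pf \<kappa>) ts) s t) \<le> 2 * W * BK * cP + 1" by simp
  qed
  moreover have "2 * W * BK * cP + 1 > 0"
    using W BK cP by (simp add: add_nonneg_pos)
  ultimately show ?thesis
    unfolding Cmk0_iff_mixed_norm_bound using Cm_eval_kterms[OF K PC adm] \<kappa>0 by blast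
qed

lemma eval_kterms_diagonal_decay:
  assumes n: "n \<le> m" and K: "Cm m K" and P: "less_osc m (n - 1) Pf"
    and adm: "\<forall>\<tau>\<in>set ts. admissible 0 0 \<tau>"
  shows "\<exists>c0>0. \<forall>\<kappa>>1. \<forall>a b. a + b + 1 \<le> n \<longrightarrow> (\<forall>s\<in>Ivl.
    norm (mixed a b (eval_kterms K (Pf \<kappa>) ts) s s) \<le> c0 * \<kappa> powr (- (real n - real a - real b - 1)))"
proof -
  from P obtain cd where PC: "\<And>\<kappa>. \<kappa> > 1 \<Longrightarrow> Cm m (Pf \<kappa>)" and cd: "cd > 0"
    and decay: "\<And>\<kappa> a b s. \<kappa> > 1 \<Longrightarrow> a + b + 1 \<le> n - 1 \<Longrightarrow> s \<in> Ivl \<Longrightarrow>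
      norm (mixed a b (Pf \<kappa>) s s) \<le> cd * \<kappa> powr (- (real (n - 1) - real a - real b - 1))"
    unfolding less_osc_def Cmk0_def by metis
  obtain BK where BK: "0 \<le> BK" "mixed_norm_bound m K BK"
    using Cm_mixed_norm_bound[OF K] by blast
  obtain W where W: "0 \<le> W" "\<And>a b. a \<le> m \<Longrightarrow> b \<le> m \<Longrightarrow> weight (mixed_kterms ts a b) \<le> W"
    using weight_mixed_kterms_bounded[of m ts] by metis
  show ?thesis
  proof (intro exI[of _ "W * BK * cd + 1"] conjI allI impI ballI)
    show "W * BK * cd + 1 > 0" using W BK cd by (simp add: add_nonneg_pos)
  next
    fix \<kappa> :: real and a b s assume \<kappa>: "\<kappa> > 1" and ab: "a + b + 1 \<le> n" and s: "s \<in> Ivl"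
    have a: "a \<le> m" and b: "b \<le> m" and n1: "real (n - 1) = real n - 1" using ab n by auto
    have "norm (mixed a b (eval_kterms K (Pf \<kappa>) ts) s s) = norm (eval_kterms K (Pf \<kappa>) (mixed_kterms ts a b) s s)"
      using mixed_eval_kterms[OF K PC[OF \<kappa>] adm a b s s] by simp
    also have "\<dots> \<le> weight (mixed_kterms ts a b) * BK * cd * \<kappa> powr (- (real (n - 1) - real a - real b))"
      by (rule norm_eval_kterms_diagonal_le[OF admissible_mixed_kterms[OF adm] a b _ BK(2,1) _ _ decay[OF \<kappa>] s])
         (use ab cd \<kappa> in auto)
    also have "\<dots> = weight (mixed_kterms ts a b) * BK * cd * \<kappa> powr (- (real n - real a - real b - 1))"
      using n1 by (simp add: algebra_simps)
    also have "\<dots> \<le> (W * BK * cd + 1) * \<kappa> powr (- (real n - real a - real b - 1))"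
    proof (rule mult_right_mono)
      have "weight (mixed_kterms ts a b) * BK * cd \<le> W * BK * cd"
        using W(2)[OF a b] BK cd by (intro mult_right_mono) auto
      thus "weight (mixed_kterms ts a b) * BK * cd \<le> W * BK * cd + 1" by simp
    qed simp
    finally show "norm (mixed a b (eval_kterms K (Pf \<kappa>) ts) s s)
        \<le> (W * BK * cd + 1) * \<kappa> powr (- (real n - real a - real b - 1))" .
  qed
qed

lemma less_osc_eval_kterms:
  assumes "n \<le> m" "Cm m K" "less_osc m (n - 1) Pf" "\<forall>\<tau>\<in>set ts. admissible 0 0 \<tau>"
  shows "less_osc m n (\<lambda>\<kappa>. eval_kterms K (Pf \<kappa>) ts)"
  using Cmk0_eval_kterms[OF assms(2) _ assms(4)] eval_kterms_diagonal_decay[OF assms] assms(3)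
  unfolding less_osc_def by blast

lemma Jfun_eq_eval_kterms: "Jfun K P e = eval_kterms K P [Integ ((-1) ^ (e - 1)) 0 0]"
  by (intro ext) (simp add: Jfun_def Lfun_def[abs_def] eval_kterms_def)

theorem lemma5p3:
  fixes m n :: nat and K :: kern
  assumes "0 < m" and "1 < n" and "n \<le> m"
    and "Cm m K"
    and "less_osc m (n - 1) (\<lambda>\<kappa>. Kn K m \<kappa> (n - 1) 1)"
    and "less_osc m (n - 1) (\<lambda>\<kappa>. Kn K m \<kappa> (n - 1) 2)"
  shows "less_osc m n (\<lambda>\<kappa>. Jfun K (Kn K m \<kappa> (n - 1) 1) 1)
       \<and> less_osc m n (\<lambda>\<kappa>. Jfun K (Kn K m \<kappa> (n - 1) 2) 2)"
  unfolding Jfun_eq_eval_kterms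
  using less_osc_eval_kterms[OF assms(3,4,5)] less_osc_eval_kterms[OF assms(3,4,6)] by simp

end
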